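(* Let $p>3$ be a prime, $q=p^h$, and $a,b\in\mathbb{F}_{q^2}^*$. Suppose $f_{a,b}(X)=X(1+aX^{q(q-1)}+bX^{2(q-1)})$ is a permutation polynomial of $\mathbb{F}_{q^2}$ and $\deg\gcd(N_{a,b},D_{a,b})=2$. Then $b=v/a^2$ for some $v\in\mathbb{F}_q^*$ with $v^2-a^{q+1}v-a^{3q+3}=0$ and $-3a^{2q+2}-4v\in\square_q^*$.
   Context: A polynomial $f\in\mathbb{F}_{q^2}[X]$ is a permutation polynomial of $\mathbb{F}_{q^2}$ if $x\mapsto f(x)$ is a bijection of $\mathbb{F}_{q^2}$. $N_{a,b}(X)=a^qX^3+X^2+b^q$ and $D_{a,b}(X)=bX^3+X+a$. $\square_q^*$ denotes the set of nonzero squares of $\mathbb{F}_q$. *)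

theory Defs
  imports "HOL-Computational_Algebra.Computational_Algebra"
begin

text \<open>The finite field F_{q^2} is modelled by a finite type of class field_gcd
 (a field with its canonical trivial gcd structure, needed so that gcd of polynomials exists)
 with CARD = q^2.\<close>

definition f_ab :: "nat \<Rightarrow> 'a::field \<Rightarrow> 'a \<Rightarrow> 'a \<Rightarrow> 'a" where
  "f_ab q a b x = x * (1 + a * x ^ (q * (q - 1)) + b * x ^ (2 * (q - 1)))"

definition N_ab :: "nat \<Rightarrow> 'a::field \<Rightarrow> 'a \<Rightarrow> 'a poly" where
  "N_ab q a b = [: b ^ q, 0, 1, a ^ q :]"

definition D_ab :: "nat \<Rightarrow> 'a::field \<Rightarrow> 'a \<Rightarrow> 'a poly" where
  "D_ab q a b = [: a, 1, 0, b :]"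

definition subfield_q :: "nat \<Rightarrow> 'a::field set" where
  "subfield_q q = {x. x ^ q = x}"

definition nonzero_squares_q :: "nat \<Rightarrow> 'a::field set" where
  "nonzero_squares_q q = {y ^ 2 | y. y \<in> subfield_q q \<and> y \<noteq> 0}"

end

theory Submission
  imports Defs "HOL-Number_Theory.Residues"
begin

text \<open>The gcd of \<open>N\<close> and \<open>D\<close> has degree 2, so it is an associate of the quadratic
  \<open>a\<^sup>q D - b N\<close>, which therefore divides \<open>D\<close>. Comparing coefficients yields two relations
  between \<open>a, b, a\<^sup>q, b\<^sup>q\<close>; they say that \<open>v = a\<^sup>2 b\<close> is fixed by the Frobenius \<open>x \<mapsto> x\<^sup>q\<close>
  and is a root of \<open>v\<^sup>2 - a\<^sup>q\<^sup>+\<^sup>1 v - a\<^sup>3\<^sup>q\<^sup>+\<^sup>3\<close>. The discriminant \<open>w = -3 a\<^sup>2\<^sup>q\<^sup>+\<^sup>2 - 4 v\<close> lies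
  in \<open>\<bbbF>\<^sub>q\<close>, hence has a square root \<open>s\<close> in \<open>\<bbbF>\<^sub>q\<^sub>2\<close>. If \<open>w\<close> were not a nonzero square of
  \<open>\<bbbF>\<^sub>q\<close>, then \<open>s\<^sup>q = -s\<close>, and \<open>x = (a\<^sup>q\<^sup>+\<^sup>1 + s) / (2 a b)\<close> would satisfy \<open>x\<^sup>q\<^sup>+\<^sup>1 = 1\<close> and
  \<open>1 + a x\<^sup>q + b x\<^sup>2 = 0\<close>. Writing \<open>x = z\<^sup>q\<^sup>-\<^sup>1\<close> with \<open>z \<noteq> 0\<close> gives \<open>f\<^sub>a\<^sub>,\<^sub>b(z) = 0 = f\<^sub>a\<^sub>,\<^sub>b(0)\<close>,
  contradicting bijectivity.\<close>

lemma card_le_mult_card_image: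
  assumes "finite A" and "\<And>y. y \<in> f ` A \<Longrightarrow> card {x \<in> A. f x = y} \<le> k"
  shows "card A \<le> k * card (f ` A)"
proof -
  have "A = (\<Union>y\<in>f ` A. {x \<in> A. f x = y})"
    by auto
  hence "card A \<le> (\<Sum>y\<in>f ` A. card {x \<in> A. f x = y})"
    by (metis card_UN_le assms(1) finite_imageI)
  also have "\<dots> \<le> (\<Sum>y\<in>f ` A. k)"
    by (rule sum_mono) (rule assms(2))
  finally show ?thesis
    by (simp add: mult.commute)
qed

lemma power_roots_eq_poly_roots:
  fixes z :: "'a::idom"
  shows "{y. y ^ k = z} = {y. poly (Polynomial.monom 1 k + [:- z:]) y = 0}"
  by (auto simp: poly_monom)

lemma degree_monom_minus_const:
  fixes z :: "'a::idom"
  assumes "k > 0"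
  shows "degree (Polynomial.monom 1 k + [:- z:]) = k"
  using assms by (subst degree_add_eq_left) (auto simp: degree_monom_eq)

lemma monom_minus_const_nonzero:
  fixes z :: "'a::idom"
  assumes "k > 0"
  shows "Polynomial.monom 1 k + [:- z:] \<noteq> 0"
  using degree_monom_minus_const[OF assms, of z] assms by auto

lemma power_roots_finite:
  fixes z :: "'a::idom"
  assumes "k > 0"
  shows "finite {y. y ^ k = z}"
  unfolding power_roots_eq_poly_roots
  by (rule poly_roots_finite[OF monom_minus_const_nonzero[OF assms]])

lemma card_power_roots_bound:
  fixes z :: "'a::idom"
  assumes "k > 0"
  shows "card {y. y ^ k = z} \<le> k"
  using card_poly_roots_bound[OF monom_minus_const_nonzero[OF assms, of z]]
  unfolding power_roots_eq_poly_roots degree_monom_minus_const[OF assms] .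

lemma card_UNIV_field_ge_2: "card (UNIV :: 'a::{field,finite} set) \<ge> 2"
  using card_mono[OF finite_UNIV, of "{0, 1 :: 'a}"] by simp

text \<open>Lagrange's theorem in the multiplicative group of the field.\<close>
lemma field_power_card_minus_one:
  fixes x :: "'a::{field,finite}"
  assumes "x \<noteq> 0"
  shows "x ^ (card (UNIV :: 'a set) - 1) = 1"
proof -
  define G :: "'a monoid" where "G = \<lparr>carrier = UNIV - {0}, monoid.mult = (*), one = 1\<rparr>"
  have "group G"
    by (rule groupI) (auto simp: G_def mult.assoc intro!: bexI[of _ "inverse x" for x])
  moreover have "x [^]\<^bsub>G\<^esub> n = x ^ n" for n
    by (induction n) (simp_all add: G_def)
  moreover have "order G = card (UNIV :: 'a set) - 1"
    by (simp add: order_def G_def card_Diff_subset)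
  ultimately show ?thesis
    using group.pow_order_eq_1[of G x] assms by (simp add: G_def)
qed

lemma field_power_card_eq_same:
  fixes x :: "'a::{field,finite}"
  shows "x ^ card (UNIV :: 'a set) = x"
proof (cases "x = 0")
  case False
  have "x ^ card (UNIV :: 'a set) = x * x ^ (card (UNIV :: 'a set) - 1)"
    using card_UNIV_field_ge_2[where 'a='a] by (simp flip: power_Suc)
  thus ?thesis
    using field_power_card_minus_one[OF False] by simp
qed (use card_UNIV_field_ge_2[where 'a='a] in simp)

text \<open>The \<open>k\<close>-th power map sends the \<open>k m\<close> nonzero elements onto the at most \<open>m\<close>
  roots of \<open>u\<^sup>m = 1\<close> with fibres of size at most \<open>k\<close>, so it hits all of them.\<close>
lemma ex_power_root_of_unity:
  fixes z :: "'a::{field,finite}"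
  assumes km: "k * m = card (UNIV :: 'a set) - 1" and "k > 0" and "z ^ m = 1"
  shows "\<exists>y. y \<noteq> 0 \<and> y ^ k = z"
proof -
  define S where "S = UNIV - {0::'a}"
  define U where "U = {u::'a. u ^ m = 1}"
  have "m > 0"
    using km card_UNIV_field_ge_2[where 'a='a] by (cases m) auto
  have card_S: "card S = k * m"
    using km by (simp add: S_def card_Diff_subset)
  have image_sub: "(\<lambda>y. y ^ k) ` S \<subseteq> U"
    using field_power_card_minus_one km by (auto simp: S_def U_def simp flip: power_mult)
  have "card S \<le> k * card ((\<lambda>y. y ^ k) ` S)"
  proof (rule card_le_mult_card_image)
    fix u
    have "card {y \<in> S. y ^ k = u} \<le> card {y. y ^ k = u}"
      by (rule card_mono[OF power_roots_finite[OF \<open>k > 0\<close>]]) auto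
    thus "card {y \<in> S. y ^ k = u} \<le> k"
      using card_power_roots_bound[OF \<open>k > 0\<close>, of u] by linarith
  qed simp
  moreover have "card U \<le> m"
    using card_power_roots_bound[OF \<open>m > 0\<close>] by (simp add: U_def)
  ultimately have "card U \<le> card ((\<lambda>y. y ^ k) ` S)"
    using card_S \<open>k > 0\<close> by simp
  hence "(\<lambda>y. y ^ k) ` S = U"
    using card_seteq[OF _ image_sub] power_roots_finite[OF \<open>m > 0\<close>] by (simp add: U_def)
  moreover have "z \<in> U"
    using assms(3) by (simp add: U_def)
  ultimately show ?thesis
    by (auto simp: S_def)
qed

lemma prime_CHAR_finite_field: "prime CHAR('a::{field,finite})"
  by (rule prime_CHAR_semidom[OF finite_imp_CHAR_pos[OF finite_UNIV]])

lemma CHAR_eq_if_card_prime_power: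
  assumes "prime p" and "card (UNIV :: 'a::{field,finite} set) = p ^ n"
  shows "CHAR('a) = p"
proof -
  note prime_CHAR_finite_field[where 'a='a]
  moreover have "CHAR('a) dvd p ^ n"
    using CHAR_dvd_CARD[where 'a='a] assms(2) by simp
  ultimately show ?thesis
    using assms(1) prime_dvd_power primes_dvd_imp_eq by blast
qed

lemma frobenius_uminus:
  fixes x :: "'a::comm_ring_1"
  assumes "prime CHAR('a)" and "q = CHAR('a) ^ h"
  shows "(- x) ^ q = - (x ^ q)"
proof -
  have "q > 0"
    using assms prime_gt_0_nat by simp
  hence "x ^ q + (- x) ^ q = 0"
    using freshmans_dream'[OF assms, of x "- x"] by (simp add: zero_power)
  thus ?thesis
    by (simp add: eq_neg_iff_add_eq_0 add.commute)
qed

lemma frobenius_diff: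
  fixes x y :: "'a::comm_ring_1"
  assumes "prime CHAR('a)" and "q = CHAR('a) ^ h"
  shows "(x - y) ^ q = x ^ q - y ^ q"
  using freshmans_dream'[OF assms, of x "- y"] frobenius_uminus[OF assms, of y] by simp

lemma frobenius_of_nat:
  assumes "prime CHAR('a::comm_semiring_1)" and "q = CHAR('a) ^ h"
  shows "(of_nat n :: 'a) ^ q = of_nat n"
proof (induction n)
  case 0
  have "q > 0"
    using assms prime_gt_0_nat by simp
  then show ?case
    by (simp add: zero_power)
next
  case (Suc n)
  then show ?case
    using freshmans_dream'[OF assms, of 1 "of_nat n"] by simp
qed

lemma frobenius_numeral:
  assumes "prime CHAR('a::comm_semiring_1)" and "q = CHAR('a) ^ h"
  shows "(numeral n :: 'a) ^ q = numeral n"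
  using frobenius_of_nat[OF assms, of "numeral n"] by simp

lemma dvd_if_dvd_and_degree_eq:
  fixes p r :: "'a::field poly"
  assumes "p dvd r" and "r \<noteq> 0" and "degree p = degree r"
  shows "r dvd p"
proof -
  obtain c where rc: "r = p * c"
    using assms(1) by (auto elim: dvdE)
  have "p \<noteq> 0" "c \<noteq> 0"
    using assms(2) rc by auto
  hence "degree c = 0"
    using degree_mult_eq[of p c] rc assms(3) by simp
  then obtain c0 where "c = [:c0:]"
    using degree0_coeffs by blast
  hence "p = r * [:inverse c0:]"
    using rc \<open>c \<noteq> 0\<close> by (simp add: mult.assoc)
  thus ?thesis
    by (rule dvdI)
qed

lemma poly_eq_linear_if_degree_le_1:
  fixes p :: "'a::zero poly"
  assumes "degree p \<le> 1"
  shows "p = [:Polynomial.coeff p 0, Polynomial.coeff p 1:]"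
  using assms by (auto simp: poly_eq_iff coeff_pCons coeff_eq_0 split: nat.split)

lemma gcd_cubics_degree_2_relations:
  fixes a b A B :: "'a::field_gcd"
  assumes b: "b \<noteq> 0" and deg: "degree (gcd [:B, 0, 1, A:] [:a, 1, 0, b:]) = 2"
  shows "b * (a * A - b * B) + A ^ 2 + b = 0" and "(a * A - b * B) * A + a * b = 0"
proof -
  define N D T where "N = [:B, 0, 1, A:]" and "D = [:a, 1, 0, b:]"
    and "T = [:a * A - b * B, A, - b:]"
  have "T = Polynomial.smult A D - Polynomial.smult b N"
    by (simp add: T_def N_def D_def mult.commute)
  hence gcd_dvd_T: "gcd N D dvd T"
    by (simp add: dvd_diff dvd_smult)
  have "T \<noteq> 0" and deg_T: "degree T = 2"
    using b by (simp_all add: T_def)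
  moreover have "degree (gcd N D) = 2"
    using deg by (simp only: N_def D_def)
  ultimately have "T dvd gcd N D"
    using dvd_if_dvd_and_degree_eq[OF gcd_dvd_T] by presburger
  hence "T dvd D"
    using dvd_trans gcd_dvd2 by blast
  then obtain Q where DQ: "D = T * Q"
    by (auto elim: dvdE)
  have "D \<noteq> 0" "degree D = 3"
    using b by (simp_all add: D_def)
  hence "degree Q = 1"
    using DQ degree_mult_eq[of T Q] deg_T by (cases "Q = 0") auto
  then obtain s0 s1 where Q: "Q = [:s0, s1:]"
    using poly_eq_linear_if_degree_le_1[of Q] by auto
  have "D = [:a * A - b * B, A, - b:] * [:s0, s1:]"
    using DQ Q by (simp add: T_def)
  also have "\<dots> = [:(a * A - b * B) * s0, (a * A - b * B) * s1 + A * s0, A * s1 - b * s0, - b * s1:]"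
    by (simp add: algebra_simps)
  finally have coeffs: "a = (a * A - b * B) * s0" "1 = (a * A - b * B) * s1 + A * s0"
    "0 = A * s1 - b * s0" "b = - b * s1"
    unfolding D_def pCons_eq_iff by blast+
  have s1: "s1 = - 1"
    using coeffs(4) b by (metis minus_equation_iff mult_cancel_left1 mult_minus_left mult.commute)
  have s0: "s0 = - A / b"
    using coeffs(3) b s1 by (simp add: field_simps)
  have "a = (a * A - b * B) * (- A / b)" "1 = (a * A - b * B) * (- 1) + A * (- A / b)"
    using coeffs(1,2) unfolding s0 s1 .
  thus "b * (a * A - b * B) + A ^ 2 + b = 0" "(a * A - b * B) * A + a * b = 0"
    using b by (simp_all add: field_simps power2_eq_square)
qed

lemma cubic_relation_consequences:
  fixes a b A B :: "'a::field"
  assumes E1: "b * (a * A - b * B) + A ^ 2 + b = 0" and E2: "(a * A - b * B) * A + a * b = 0"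
    and b: "b \<noteq> 0"
  shows "a * b ^ 2 = A ^ 3 + b * A" and "A ^ 2 * B = a ^ 2 * b" and "b * B * A = a * (A ^ 2 + b)"
proof -
  have "a * b ^ 2 - (A ^ 3 + b * A)
          = b * ((a * A - b * B) * A + a * b) - A * (b * (a * A - b * B) + A ^ 2 + b)"
    by (simp add: algebra_simps power2_eq_square power3_eq_cube)
  thus cubic: "a * b ^ 2 = A ^ 3 + b * A"
    using E1 E2 by simp
  have "b * B * A - a * (A ^ 2 + b) = - ((a * A - b * B) * A + a * b)"
    by (simp add: algebra_simps power2_eq_square)
  thus bBA: "b * B * A = a * (A ^ 2 + b)"
    using E2 by simp
  have "b * (A ^ 2 * B) = A * (b * B * A)"
    by (simp add: algebra_simps power2_eq_square)
  also have "\<dots> = a * (a * b ^ 2)"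
    unfolding bBA using cubic by (simp add: algebra_simps power2_eq_square power3_eq_cube)
  finally show "A ^ 2 * B = a ^ 2 * b"
    using b by (simp add: algebra_simps power2_eq_square)
qed

text \<open>The roots \<open>x = (a A + s) / (2 a b)\<close> of \<open>b\<^sup>2 X\<^sup>2 - b A X + A\<^sup>2 + b\<close> are roots of
  \<open>D = b X\<^sup>3 + X + a\<close>, and \<open>y = (a A - s) / (2 A B)\<close> is their reciprocal.\<close>
lemma reciprocal_root_from_discriminant:
  fixes a b A B s x y :: "'a::field"
  assumes E1: "b * (a * A - b * B) + A ^ 2 + b = 0" and E2: "(a * A - b * B) * A + a * b = 0"
    and nz: "a \<noteq> 0" "b \<noteq> 0" "A \<noteq> 0" "B \<noteq> 0" "(2::'a) \<noteq> 0"
    and x: "2 * a * b * x = a * A + s" and y: "2 * A * B * y = a * A - s"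
    and s: "s ^ 2 = - 3 * a ^ 2 * A ^ 2 - 4 * a ^ 2 * b"
  shows "x * y = 1" and "1 + a * y + b * x ^ 2 = 0"
proof -
  have bBA: "b * B * A = a * (A ^ 2 + b)"
    using cubic_relation_consequences[OF E1 E2 nz(2)] by simp
  have four: "(4::'a) \<noteq> 0"
    using nz(5) by (metis mult_eq_0_iff numeral_Bit0_eq_double)
  have "4 * a * (b * B * A) * (x * y) = (2 * a * b * x) * (2 * A * B * y)"
    by (simp add: algebra_simps)
  also have "\<dots> = a ^ 2 * A ^ 2 - s ^ 2"
    unfolding x y by (simp add: algebra_simps power2_eq_square)
  also have "\<dots> = 4 * a * (b * B * A)"
    unfolding s bBA by (simp add: algebra_simps power2_eq_square)
  finally show xy: "x * y = 1"
    using nz four by simp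
  have "4 * a ^ 2 * (b * (b * x ^ 2 - A * x) + A ^ 2 + b)
          = (2 * a * b * x - a * A) ^ 2 - (- 3 * a ^ 2 * A ^ 2 - 4 * a ^ 2 * b)"
    by (simp add: algebra_simps power2_eq_square)
  also have "\<dots> = 0"
    using x s by simp
  finally have quadratic: "b * (b * x ^ 2 - A * x) + A ^ 2 + b = 0"
    using nz four by simp
  have "b * (b * (x + a + b * x ^ 3))
          = ((b * (b * x ^ 2 - A * x) + A ^ 2 + b) - (b * (a * A - b * B) + A ^ 2 + b)) * (b * x + A)
            + b * x * (b * (a * A - b * B) + A ^ 2 + b) + b * ((a * A - b * B) * A + a * b)"
    by (simp add: algebra_simps power2_eq_square power3_eq_cube)
  hence "x + a + b * x ^ 3 = 0"
    using quadratic E1 E2 nz by simp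
  moreover have "x * (1 + a * y + b * x ^ 2) = x + a * (x * y) + b * x ^ 3"
    by (simp add: algebra_simps power2_eq_square power3_eq_cube)
  ultimately show "1 + a * y + b * x ^ 2 = 0"
    using xy by auto
qed

lemma power_power_eq_same_if_card:
  fixes x :: "'a::{field,finite}"
  assumes "card (UNIV :: 'a set) = q ^ 2"
  shows "(x ^ q) ^ q = x"
  using field_power_card_eq_same[of x] assms by (simp add: power2_eq_square flip: power_mult)

lemma ex_sqrt_if_power_eq_same:
  fixes w :: "'a::{field,finite}"
  assumes card: "card (UNIV :: 'a set) = q ^ 2" and "odd q" and wq: "w ^ q = w"
  shows "\<exists>s. s ^ 2 = w"
proof (cases "w = 0")
  case False
  obtain k where q: "q = 2 * k + 1"
    using \<open>odd q\<close> oddE by blast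
  have "w * w ^ (q - 1) = w * 1"
    using wq q by (simp flip: power_Suc)
  hence "w ^ (q - 1) = 1"
    using False by simp
  hence "w ^ ((q - 1) * (k + 1)) = 1"
    by (simp only: power_mult power_one)
  moreover have "2 * ((q - 1) * (k + 1)) = card (UNIV :: 'a set) - 1"
    unfolding card q by (simp add: power2_eq_square algebra_simps)
  ultimately show ?thesis
    using ex_power_root_of_unity[of 2 "(q - 1) * (k + 1)" w] by auto
qed auto

lemma f_ab_not_inj_if_root_of_norm_one:
  fixes a b x :: "'a::{field,finite}"
  assumes card: "card (UNIV :: 'a set) = q ^ 2"
    and norm: "x ^ (q + 1) = 1" and root: "1 + a * x ^ q + b * x ^ 2 = 0"
  shows "\<not> inj (f_ab q a b)"
proof -
  have "q \<ge> 2"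
    using card_UNIV_field_ge_2[where 'a='a] card by (cases "q \<le> 1") (auto simp: le_Suc_eq)
  moreover have "(q - 1) * (q + 1) = card (UNIV :: 'a set) - 1"
    unfolding card by (simp add: power2_eq_square algebra_simps)
  ultimately obtain z where z: "z \<noteq> 0" "z ^ (q - 1) = x"
    using ex_power_root_of_unity[of "q - 1" "q + 1" x] norm by auto
  have "f_ab q a b z = z * (1 + a * x ^ q + b * x ^ 2)"
    unfolding f_ab_def z(2)[symmetric] by (simp add: mult.commute flip: power_mult)
  hence "f_ab q a b z = f_ab q a b 0"
    using root by (simp add: f_ab_def)
  with z(1) show ?thesis
    by (auto dest: injD)
qed

lemma norm_one_root_if_sqrt_anti_fixed:
  fixes a b s :: "'a::{field,finite}"
  assumes card: "card (UNIV :: 'a set) = q ^ 2" and q: "q = CHAR('a) ^ h"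
    and two: "(2::'a) \<noteq> 0" and a: "a \<noteq> 0" and b: "b \<noteq> 0"
    and E1: "b * (a * a ^ q - b * b ^ q) + (a ^ q) ^ 2 + b = 0"
    and E2: "(a * a ^ q - b * b ^ q) * a ^ q + a * b = 0"
    and s: "s ^ 2 = - 3 * a ^ 2 * (a ^ q) ^ 2 - 4 * a ^ 2 * b" and sq: "s ^ q = - s"
  shows "\<exists>x. x ^ (q + 1) = 1 \<and> 1 + a * x ^ q + b * x ^ 2 = 0"
proof -
  note char = prime_CHAR_finite_field[where 'a='a]
  define A B where "A = a ^ q" and "B = b ^ q"
  have "A \<noteq> 0" "B \<noteq> 0"
    using a b by (simp_all add: A_def B_def)
  define x y where "x = (a * A + s) / (2 * a * b)" and "y = (a * A - s) / (2 * A * B)"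
  have "x ^ q = (A * a - s) / (2 * A * B)"
    unfolding x_def power_divide freshmans_dream'[OF char q] power_mult_distrib sq
      frobenius_numeral[OF char q]
    by (simp add: A_def B_def power_power_eq_same_if_card[OF card])
  hence xq: "x ^ q = y"
    by (simp add: y_def mult.commute)
  have "2 * a * b * x = a * A + s" "2 * A * B * y = a * A - s"
    using a b two \<open>A \<noteq> 0\<close> \<open>B \<noteq> 0\<close> by (simp_all add: x_def y_def)
  note reciprocal = reciprocal_root_from_discriminant[OF E1[folded A_def B_def]
      E2[folded A_def B_def] a b \<open>A \<noteq> 0\<close> \<open>B \<noteq> 0\<close> two this s[folded A_def]]
  show ?thesis
    by (rule exI[of _ x]) (use reciprocal xq in \<open>simp add: mult.commute\<close>)
qed

lemma power_mult_add_same: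
  fixes x :: "'a::comm_monoid_mult"
  shows "x ^ (k * q + k) = x ^ k * (x ^ q) ^ k"
  by (simp add: power_add power_mult mult.commute[of k q] mult.commute[of "x ^ k"])

lemma frobenius_fixed_quadratic_root:
  fixes a b :: "'a::field"
  assumes b: "b \<noteq> 0"
    and E1: "b * (a * a ^ q - b * b ^ q) + (a ^ q) ^ 2 + b = 0"
    and E2: "(a * a ^ q - b * b ^ q) * a ^ q + a * b = 0"
  shows "(a ^ 2 * b) ^ q = a ^ 2 * b"
    and "(a ^ 2 * b) ^ 2 - a ^ (q + 1) * (a ^ 2 * b) - a ^ (3 * q + 3) = 0"
proof -
  note relations = cubic_relation_consequences[OF E1 E2 b]
  show "(a ^ 2 * b) ^ q = a ^ 2 * b"
    using relations(2) by (simp add: power_mult_distrib mult.commute flip: power_mult)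
  have "(a ^ 2 * b) ^ 2 - a ^ (q + 1) * (a ^ 2 * b) - a ^ (3 * q + 3)
          = a ^ 3 * (a * b ^ 2 - ((a ^ q) ^ 3 + b * a ^ q))"
    using power_mult_add_same[of a 3 q]
    by (simp add: algebra_simps power2_eq_square power3_eq_cube)
  thus "(a ^ 2 * b) ^ 2 - a ^ (q + 1) * (a ^ 2 * b) - a ^ (3 * q + 3) = 0"
    using relations(1) by simp
qed

lemma discriminant_in_nonzero_squares:
  fixes a b :: "'a::{field,finite}"
  assumes card: "card (UNIV :: 'a set) = q ^ 2" and q: "q = CHAR('a) ^ h" and "odd q"
    and two: "(2::'a) \<noteq> 0" and a: "a \<noteq> 0" and b: "b \<noteq> 0"
    and E1: "b * (a * a ^ q - b * b ^ q) + (a ^ q) ^ 2 + b = 0"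
    and E2: "(a * a ^ q - b * b ^ q) * a ^ q + a * b = 0"
    and inj: "inj (f_ab q a b)"
  shows "- 3 * a ^ (2 * q + 2) - 4 * (a ^ 2 * b) \<in> nonzero_squares_q q"
proof -
  note char = prime_CHAR_finite_field[where 'a='a]
  define w where "w = - 3 * a ^ (2 * q + 2) - 4 * (a ^ 2 * b)"
  have w_eq: "w = - (3 * (a * a ^ q) ^ 2) - 4 * (a ^ 2 * b)"
    unfolding w_def power_mult_add_same by (simp add: power_mult_distrib)
  have "(a * a ^ q) ^ q = a * a ^ q"
    using power_power_eq_same_if_card[OF card, of a] by (simp add: power_mult_distrib mult.commute)
  hence "((a * a ^ q) ^ 2) ^ q = (a * a ^ q) ^ 2"
    by (metis power_mult mult.commute)
  hence wq: "w ^ q = w"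
    unfolding w_eq frobenius_diff[OF char q] frobenius_uminus[OF char q] power_mult_distrib[of 3]
      power_mult_distrib[of 4] frobenius_numeral[OF char q]
      frobenius_fixed_quadratic_root(1)[OF b E1 E2]
    by simp
  obtain s where s: "s ^ 2 = w"
    using ex_sqrt_if_power_eq_same[OF card \<open>odd q\<close> wq] by blast
  have "(s ^ q) ^ 2 = s ^ 2"
    using s wq by (metis power_mult mult.commute)
  hence "s ^ q = s \<or> s ^ q = - s"
    by (simp add: power2_eq_iff)
  moreover have "s ^ q \<noteq> - s"
  proof
    assume "s ^ q = - s"
    moreover have "s ^ 2 = - 3 * a ^ 2 * (a ^ q) ^ 2 - 4 * a ^ 2 * b"
      using s w_eq by (simp add: power_mult_distrib)
    ultimately obtain x where "x ^ (q + 1) = 1" "1 + a * x ^ q + b * x ^ 2 = 0"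
      using norm_one_root_if_sqrt_anti_fixed[OF card q two a b E1 E2] by blast
    thus False
      using f_ab_not_inj_if_root_of_norm_one[OF card] inj by blast
  qed
  ultimately have "s \<in> subfield_q q" "s \<noteq> 0"
    by (auto simp: subfield_q_def)
  thus ?thesis
    using s unfolding nonzero_squares_q_def w_def[symmetric] by blast
qed

theorem mainTheorem5:
  fixes p h q :: nat and a b :: "'a::{field_gcd, finite}"
  assumes "prime p" and "p > 3" and "q = p ^ h"
    and "card (UNIV :: 'a set) = q ^ 2"
    and "a \<noteq> 0" and "b \<noteq> 0"
    and "bij (f_ab q a b)"
    and "degree (gcd (N_ab q a b) (D_ab q a b)) = 2"
  shows "\<exists>v. v \<in> subfield_q q \<and> v \<noteq> 0 \<and> b = v / a ^ 2
           \<and> v ^ 2 - a ^ (q + 1) * v - a ^ (3 * q + 3) = 0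
           \<and> - 3 * a ^ (2 * q + 2) - 4 * v \<in> nonzero_squares_q q"
proof -
  note card = assms(4)
  have "CHAR('a) = p"
    using CHAR_eq_if_card_prime_power[OF assms(1)] card assms(3) by (simp flip: power_mult)
  hence q: "q = CHAR('a) ^ h"
    using assms(3) by simp
  have "odd q"
    using assms(1-3) prime_odd_nat by simp
  have two: "(2::'a) \<noteq> 0"
    using of_nat_eq_0_iff_char_dvd[of 2, where 'a='a] \<open>CHAR('a) = p\<close> assms(2)
    by (auto dest: dvd_imp_le)
  have E1: "b * (a * a ^ q - b * b ^ q) + (a ^ q) ^ 2 + b = 0"
    and E2: "(a * a ^ q - b * b ^ q) * a ^ q + a * b = 0"
    using gcd_cubics_degree_2_relations[of b "b ^ q" "a ^ q" a] assms(6,8)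
    by (simp_all add: N_ab_def D_ab_def)
  show ?thesis
    using frobenius_fixed_quadratic_root[OF assms(6) E1 E2] assms(5,6)
      discriminant_in_nonzero_squares[OF card q \<open>odd q\<close> two assms(5,6) E1 E2 bij_is_inj[OF assms(7)]]
    by (intro exI[of _ "a ^ 2 * b"]) (auto simp: subfield_q_def)
qed

end
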